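(* Let $\Sigma$ be a complete rational polyhedral fan in $\mathbb{R}^n$ with rays $\rho_1,\ldots,\rho_k$ and primitive ray generators $u_1,\ldots,u_k\in\mathbb{Z}^n$, and let $F=[u_1~\cdots~u_k]\in\mathbb{Z}^{n\times k}$. Let $Z\subset\mathbb{C}^k$ be the base locus and $G\subset(\mathbb{C}^* )^k$ the group of the Cox construction (see context). Let $P\in\mathbb{Z}^{k\times k}$, $Q\in\mathbb{Z}^{n\times n}$ be unimodular matrices with $PF^\top Q=\mathrm{diag}(s_1,\ldots,s_n)$ (a $k\times n$ matrix in Smith normal form, all $s_i\neq 0$), let $P'$ be the submatrix of the first $n$ rows and $P''$ the submatrix of the last $k-n$ rows of $P$, and let $W_i\subset\mathbb{C}^*$ be the group of $s_i$-th roots of unity. Then for every $z=(z_1,\ldots,z_k)\in\mathbb{C}^k\setminus Z$, the orbit $G\cdot z=\{(g_1z_1,\ldots,g_kz_k)\mid g\in G\}$ is parametrized by the map $$\Big(\bigoplus_{i=1}^n W_i\Big)\oplus(\mathbb{C}^* )^{k-n}\to\mathbb{C}^k\setminus Z,\qquad (w,\lambda)\mapsto\big(w^{P'_{:,1}}\lambda^{P''_{:,1}}z_1,\ \ldots,\ w^{P'_{:,k}}\lambda^{P''_{:,k}}z_k\big),$$ i.e. $G\cdot z$ is the image of this map.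
   Context: Notation: for a vector $v$ and integer vector $a$, $v^a=\prod_j v_j^{a_j}$; $P'_{:,i}$ and $P''_{:,i}$ denote the $i$-th columns of $P'$, $P''$. The base locus is $Z=V_{\mathbb{C}^k}(B)$ where $B\subset\mathbb{C}[x_1,\ldots,x_k]$ is the monomial ideal generated by $\prod_{i:\rho_i\not\subset\sigma}x_i$ for $\sigma$ ranging over the $n$-dimensional cones of $\Sigma$. The group $G$ is $G=\{g\in(\mathbb{C}^* )^k\mid g^{F_{1,:}}=\cdots=g^{F_{n,:}}=1\}$, where $F_{j,:}$ is the $j$-th row of $F$; it acts on $\mathbb{C}^k\setminus Z$ by coordinatewise multiplication. The toric variety $X_\Sigma$ is the quotient of $\mathbb{C}^k\setminus Z$ by $G$ via the toric morphism $\pi$ induced by $F$. *)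

theory Defs
  imports Complex_Main "Jordan_Normal_Form.Determinant"
begin

definition Rn :: "nat \<Rightarrow> (nat \<Rightarrow> real) set" where
  "Rn n = {v. \<forall>j\<ge>n. v j = 0}"

definition int_vec :: "nat \<Rightarrow> (nat \<Rightarrow> real) \<Rightarrow> bool" where
  "int_vec n v \<longleftrightarrow> v \<in> Rn n \<and> (\<forall>j. v j \<in> \<int>)"

definition dotp :: "nat \<Rightarrow> (nat \<Rightarrow> real) \<Rightarrow> (nat \<Rightarrow> real) \<Rightarrow> real" where
  "dotp n m v = (\<Sum>j<n. m j * v j)"

definition cone_gen :: "(nat \<Rightarrow> real) set \<Rightarrow> (nat \<Rightarrow> real) set" where
  "cone_gen S = {v. \<exists>c. (\<forall>x\<in>S. 0 \<le> c x) \<and> (\<forall>j. v j = (\<Sum>x\<in>S. c x * x j))}"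

definition rational_polyhedral_cone :: "nat \<Rightarrow> (nat \<Rightarrow> real) set \<Rightarrow> bool" where
  "rational_polyhedral_cone n \<sigma> \<longleftrightarrow>
     (\<exists>S. finite S \<and> (\<forall>x\<in>S. int_vec n x) \<and> \<sigma> = cone_gen S)"

definition strongly_convex :: "(nat \<Rightarrow> real) set \<Rightarrow> bool" where
  "strongly_convex \<sigma> \<longleftrightarrow> \<sigma> \<inter> (\<lambda>v j. - v j) ` \<sigma> = {(\<lambda>j. 0)}"

definition face_of_cone :: "nat \<Rightarrow> (nat \<Rightarrow> real) set \<Rightarrow> (nat \<Rightarrow> real) set \<Rightarrow> bool" where
  "face_of_cone n \<tau> \<sigma> \<longleftrightarrow>
     (\<exists>m\<in>Rn n. (\<forall>v\<in>\<sigma>. 0 \<le> dotp n m v) \<and> \<tau> = {v\<in>\<sigma>. dotp n m v = 0})"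

definition lin_indep :: "nat \<Rightarrow> nat \<Rightarrow> (nat \<Rightarrow> nat \<Rightarrow> real) \<Rightarrow> bool" where
  "lin_indep n d vs \<longleftrightarrow>
     (\<forall>c. (\<forall>j<n. (\<Sum>t<d. c t * vs t j) = 0) \<longrightarrow> (\<forall>t<d. c t = 0))"

definition cone_dim :: "nat \<Rightarrow> (nat \<Rightarrow> real) set \<Rightarrow> nat \<Rightarrow> bool" where
  "cone_dim n \<sigma> d \<longleftrightarrow>
     (\<exists>vs. (\<forall>t<d. vs t \<in> \<sigma>) \<and> lin_indep n d vs) \<and>
     \<not> (\<exists>vs. (\<forall>t<Suc d. vs t \<in> \<sigma>) \<and> lin_indep n (Suc d) vs)"

definition is_fan :: "nat \<Rightarrow> (nat \<Rightarrow> real) set set \<Rightarrow> bool" where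
  "is_fan n \<Sigma> \<longleftrightarrow> finite \<Sigma> \<and>
     (\<forall>\<sigma>\<in>\<Sigma>. rational_polyhedral_cone n \<sigma> \<and> strongly_convex \<sigma>) \<and>
     (\<forall>\<sigma>\<in>\<Sigma>. \<forall>\<tau>. face_of_cone n \<tau> \<sigma> \<longrightarrow> \<tau> \<in> \<Sigma>) \<and>
     (\<forall>\<sigma>1\<in>\<Sigma>. \<forall>\<sigma>2\<in>\<Sigma>. face_of_cone n (\<sigma>1 \<inter> \<sigma>2) \<sigma>1 \<and> face_of_cone n (\<sigma>1 \<inter> \<sigma>2) \<sigma>2)"

definition complete_fan :: "nat \<Rightarrow> (nat \<Rightarrow> real) set set \<Rightarrow> bool" where
  "complete_fan n \<Sigma> \<longleftrightarrow> is_fan n \<Sigma> \<and> \<Union>\<Sigma> = Rn n"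

definition primitive_generator :: "nat \<Rightarrow> (nat \<Rightarrow> real) \<Rightarrow> (nat \<Rightarrow> real) set \<Rightarrow> bool" where
  "primitive_generator n u \<rho> \<longleftrightarrow> int_vec n u \<and> u \<noteq> (\<lambda>j. 0) \<and> u \<in> \<rho> \<and>
     (\<forall>v\<in>\<rho>. int_vec n v \<longrightarrow> (\<exists>m::nat. v = (\<lambda>j. real m * u j)))"

definition col_real :: "int mat \<Rightarrow> nat \<Rightarrow> (nat \<Rightarrow> real)" where
  "col_real F i = (\<lambda>j. if j < dim_row F then real_of_int (F $$ (j, i)) else 0)"

definition base_locus ::
  "nat \<Rightarrow> nat \<Rightarrow> (nat \<Rightarrow> real) set set \<Rightarrow> (nat \<Rightarrow> (nat \<Rightarrow> real) set) \<Rightarrow> complex vec set" where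
  "base_locus n k \<Sigma> \<rho> = {z \<in> carrier_vec k. \<forall>\<sigma>\<in>\<Sigma>. cone_dim n \<sigma> n \<longrightarrow>
       (\<Prod>i\<in>{i. i < k \<and> \<not> \<rho> i \<subseteq> \<sigma>}. z $ i) = 0}"

definition cox_group :: "nat \<Rightarrow> nat \<Rightarrow> int mat \<Rightarrow> complex vec set" where
  "cox_group n k F = {g \<in> carrier_vec k. (\<forall>i<k. g $ i \<noteq> 0) \<and>
       (\<forall>j<n. (\<Prod>i<k. (g $ i) powi (F $$ (j, i))) = 1)}"

definition orbit :: "nat \<Rightarrow> complex vec set \<Rightarrow> complex vec \<Rightarrow> complex vec set" where
  "orbit k G z = (\<lambda>g. vec k (\<lambda>i. g $ i * z $ i)) ` G"

definition param_map ::
  "nat \<Rightarrow> nat \<Rightarrow> int mat \<Rightarrow> complex vec \<Rightarrow> complex vec \<Rightarrow> complex vec \<Rightarrow> complex vec" where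
  "param_map n k P z w lam = vec k (\<lambda>j.
      (\<Prod>i<n. (w $ i) powi (P $$ (i, j))) *
      (\<Prod>i<k - n. (lam $ i) powi (P $$ (n + i, j))) * z $ j)"

definition param_domain :: "nat \<Rightarrow> nat \<Rightarrow> (nat \<Rightarrow> int) \<Rightarrow> (complex vec \<times> complex vec) set" where
  "param_domain n k s = {(w, lam). w \<in> carrier_vec n \<and> (\<forall>i<n. (w $ i) ^ nat (s i) = 1) \<and>
       lam \<in> carrier_vec (k - n) \<and> (\<forall>i<k - n. lam $ i \<noteq> 0)}"

end

theory Submission
  imports Defs
begin

(* Write h^A for the vector of monomials h^(A_{:,j}) (vec_powi).  The map A |-> h^A turns matrix
   products into composition and G = {g in (C^* )^k. g^(F^T) = 1}.  For h in (C^* )^k, h^P lies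
   in G iff h^(P F^T) = 1 iff h^(P F^T Q) = 1 (Q is invertible), i.e. iff h_c^(s_c) = 1 for c < n.
   Since P is invertible, h |-> h^P therefore maps (W_1 + ... + W_n) + (C^* )^(k-n) onto G, and
   (h^P) z is the parametrisation.  Orbits avoid Z because G acts by nonzero scalars.

   The geometric input is n <= k, i.e. that the ray generators of a complete fan span R^n.  A cone
   of the fan that is minimal among those not orthogonal to a given m <> 0 has no proper face with
   this property.  Comparing the ratios h/y on its generators with a strictly positive functional
   y (Gordan, via Farkas) shows that the generators are collinear, so the cone is a ray rho_i, and
   then <m, u_i> <> 0. *)

section \<open>Monomial maps and the Cox group\<close>

lemma power_int_prod_distrib:
  "(\<Prod>i\<in>A. f i) powi m = (\<Prod>i\<in>A. (f i :: 'a :: field) powi m)"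
  by (induction A rule: infinite_finite_induct) (auto simp: power_int_mult_distrib)

lemma power_int_sum:
  "(x :: 'a :: field) \<noteq> 0 \<Longrightarrow> x powi (\<Sum>i\<in>A. f i) = (\<Prod>i\<in>A. x powi f i)"
  by (induction A rule: infinite_finite_induct) (auto simp: power_int_add)

definition torus :: "nat \<Rightarrow> 'a :: zero vec set" where
  "torus k = {g \<in> carrier_vec k. \<forall>i<k. g $ i \<noteq> 0}"

(* Multiplicative analogue of the product h^T A: entry j is the monomial h^(A_{:,j}). *)
definition vec_powi :: "'a :: field vec \<Rightarrow> int mat \<Rightarrow> 'a vec" where
  "vec_powi h A = vec (dim_col A) (\<lambda>j. \<Prod>l<dim_vec h. h $ l powi A $$ (l, j))"

lemma dim_vec_powi [simp]: "dim_vec (vec_powi h A) = dim_col A"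
  by (simp add: vec_powi_def)

lemma vec_powi_index [simp]:
  "j < dim_col A \<Longrightarrow> vec_powi h A $ j = (\<Prod>l<dim_vec h. h $ l powi A $$ (l, j))"
  by (simp add: vec_powi_def)

lemma vec_powi_carrier [simp]: "vec_powi h A \<in> carrier_vec (dim_col A)"
  by (simp add: vec_powi_def)

lemma vec_powi_torus: "h \<in> torus r \<Longrightarrow> vec_powi h A \<in> torus (dim_col A)"
  by (auto simp: torus_def)

lemma vec_powi_mult:
  assumes h: "h \<in> torus r" and A: "A \<in> carrier_mat r m" and B: "B \<in> carrier_mat m c"
  shows "vec_powi (vec_powi h A) B = vec_powi h (A * B)"
proof (rule eq_vecI)
  fix j assume "j < dim_vec (vec_powi h (A * B))"
  hence j: "j < c" using B by simp
  have h_dim: "dim_vec h = r" and h_nz: "\<forall>l<r. h $ l \<noteq> 0" using h by (auto simp: torus_def)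
  have "vec_powi (vec_powi h A) B $ j = (\<Prod>i<m. \<Prod>l<r. h $ l powi (A $$ (l, i) * B $$ (i, j)))"
    using A B j by (simp add: h_dim power_int_prod_distrib power_int_mult)
  also have "\<dots> = (\<Prod>l<r. \<Prod>i<m. h $ l powi (A $$ (l, i) * B $$ (i, j)))"
    by (rule prod.swap)
  also have "\<dots> = (\<Prod>l<r. h $ l powi (\<Sum>i<m. A $$ (l, i) * B $$ (i, j)))"
    using h_nz by (simp add: power_int_sum)
  also have "\<dots> = vec_powi h (A * B) $ j"
    using A B j by (simp add: h_dim scalar_prod_def atLeast0LessThan)
  finally show "vec_powi (vec_powi h A) B $ j = vec_powi h (A * B) $ j" .
qed (use A B in simp)

lemma vec_powi_one_mat: "h \<in> carrier_vec r \<Longrightarrow> vec_powi h (1\<^sub>m r) = h"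
proof (rule eq_vecI)
  fix j assume "h \<in> carrier_vec r" and "j < dim_vec h"
  then have "vec_powi h (1\<^sub>m r) $ j = (\<Prod>l<r. if l = j then h $ j else 1)"
    by (intro trans[OF vec_powi_index prod.cong]) auto
  with \<open>j < dim_vec h\<close> \<open>h \<in> carrier_vec r\<close> show "vec_powi h (1\<^sub>m r) $ j = h $ j"
    by simp
qed simp

lemma vec_powi_ones: "vec_powi (vec r (\<lambda>_. 1)) A = vec (dim_col A) (\<lambda>_. 1)"
  by (rule eq_vecI) simp_all

lemma vec_powi_diag_mat:
  assumes "h \<in> carrier_vec r" and "c \<le> r"
  shows "vec_powi h (mat r c (\<lambda>(i, j). if i = j then s i else 0)) = vec c (\<lambda>j. h $ j powi s j)"
proof (rule eq_vecI)
  fix j assume "j < dim_vec (vec c (\<lambda>j. h $ j powi s j))"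
  with assms have "j < c" "j < r" by auto
  with assms have "vec_powi h (mat r c (\<lambda>(i, j). if i = j then s i else 0)) $ j
      = (\<Prod>l<r. if l = j then h $ j powi s j else 1)"
    by (intro trans[OF vec_powi_index prod.cong]) auto
  with \<open>j < c\<close> \<open>j < r\<close> show "vec_powi h (mat r c (\<lambda>(i, j). if i = j then s i else 0)) $ j
      = vec c (\<lambda>j. h $ j powi s j) $ j"
    by simp
qed simp

lemma vec_powi_eq_ones_iff:
  assumes h: "h \<in> torus r"
    and Q: "Q \<in> carrier_mat r r" "Q' \<in> carrier_mat r r" "Q * Q' = 1\<^sub>m r"
  shows "vec_powi h Q = vec r (\<lambda>_. 1) \<longleftrightarrow> h = vec r (\<lambda>_. 1)"
proof
  assume "vec_powi h Q = vec r (\<lambda>_. 1)"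
  moreover have "h = vec_powi (vec_powi h Q) Q'"
    using h Q by (simp add: vec_powi_mult vec_powi_one_mat torus_def)
  ultimately show "h = vec r (\<lambda>_. 1)"
    using Q by (simp add: vec_powi_ones)
qed (use Q in \<open>simp add: vec_powi_ones\<close>)

lemma unimodular_inverse:
  assumes A: "(A :: int mat) \<in> carrier_mat r r" and det: "det A = 1 \<or> det A = -1"
  obtains B where "B \<in> carrier_mat r r" "A * B = 1\<^sub>m r" "B * A = 1\<^sub>m r"
proof
  have det_sq: "det A * det A = 1" using det by auto
  show "det A \<cdot>\<^sub>m adj_mat A \<in> carrier_mat r r" using adj_mat[OF A] by simp
  show "A * (det A \<cdot>\<^sub>m adj_mat A) = 1\<^sub>m r"
    using adj_mat[OF A] A by (simp add: mult_smult_distrib, intro eq_matI)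
      (auto simp: mult.assoc[symmetric] det_sq)
  show "(det A \<cdot>\<^sub>m adj_mat A) * A = 1\<^sub>m r"
    using adj_mat[OF A] A by (simp add: mult_smult_assoc_mat, intro eq_matI)
      (auto simp: mult.assoc[symmetric] det_sq)
qed

lemma cox_group_iff:
  assumes "F \<in> carrier_mat n k"
  shows "g \<in> cox_group n k F \<longleftrightarrow> g \<in> torus k \<and> vec_powi g (transpose_mat F) = vec n (\<lambda>_. 1)"
  using assms by (auto simp: cox_group_def torus_def vec_eq_iff)

lemma vec_powi_mem_cox_group_iff:
  assumes nk: "n \<le> k" and F: "F \<in> carrier_mat n k" and P: "P \<in> carrier_mat k k"
    and Q: "Q \<in> carrier_mat n n" "Q' \<in> carrier_mat n n" "Q * Q' = 1\<^sub>m n"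
    and snf: "P * transpose_mat F * Q = mat k n (\<lambda>(i, j). if i = j then s i else 0)"
    and h: "h \<in> torus k"
  shows "vec_powi h P \<in> cox_group n k F \<longleftrightarrow> (\<forall>c<n. h $ c powi s c = 1)"
proof -
  have FT: "transpose_mat F \<in> carrier_mat k n" using F by simp
  define E where "E = vec_powi h (P * transpose_mat F)"
  have E: "E \<in> torus n" unfolding E_def using vec_powi_torus[OF h, of "P * transpose_mat F"] F by simp
  have "vec_powi h P \<in> cox_group n k F \<longleftrightarrow> E = vec n (\<lambda>_. 1)"
    using cox_group_iff[OF F] vec_powi_torus[OF h, of P] P
    by (simp add: E_def vec_powi_mult[OF h P FT])
  also have "\<dots> \<longleftrightarrow> vec_powi E Q = vec n (\<lambda>_. 1)"
    using vec_powi_eq_ones_iff[OF E Q] by simp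
  also have "vec_powi E Q = vec n (\<lambda>c. h $ c powi s c)"
    using h nk unfolding E_def vec_powi_mult[OF h mult_carrier_mat[OF P FT] Q(1)] snf
    by (simp add: vec_powi_diag_mat torus_def)
  finally show ?thesis by (auto simp: vec_eq_iff)
qed

(* The group (W_1 + ... + W_n) + (C^* )^(k-n) of the parametrisation, as a subgroup of (C^* )^k. *)
definition root_torus :: "nat \<Rightarrow> nat \<Rightarrow> (nat \<Rightarrow> int) \<Rightarrow> 'a :: field vec set" where
  "root_torus n k s = {h \<in> torus k. \<forall>c<n. h $ c powi s c = 1}"

lemma cox_group_eq_vec_powi_image:
  assumes nk: "n \<le> k" and F: "F \<in> carrier_mat n k"
    and P: "P \<in> carrier_mat k k" "det P = 1 \<or> det P = -1"
    and Q: "Q \<in> carrier_mat n n" "det Q = 1 \<or> det Q = -1"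
    and snf: "P * transpose_mat F * Q = mat k n (\<lambda>(i, j). if i = j then s i else 0)"
  shows "cox_group n k F = (\<lambda>h. vec_powi h P) ` root_torus n k s"
proof
  obtain Q' where Q': "Q' \<in> carrier_mat n n" "Q * Q' = 1\<^sub>m n"
    using unimodular_inverse[OF Q] by metis
  note member = vec_powi_mem_cox_group_iff[OF nk F P(1) Q(1) Q' snf]
  show "(\<lambda>h. vec_powi h P) ` root_torus n k s \<subseteq> cox_group n k F"
    using member by (auto simp: root_torus_def)
  show "cox_group n k F \<subseteq> (\<lambda>h. vec_powi h P) ` root_torus n k s"
  proof
    fix g assume g: "g \<in> cox_group n k F"
    obtain P' where P': "P' \<in> carrier_mat k k" "P' * P = 1\<^sub>m k"
      using unimodular_inverse[OF P] by metis
    have g_torus: "g \<in> torus k" using g cox_group_iff[OF F] by blast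
    define h where "h = vec_powi g P'"
    have h: "h \<in> torus k" unfolding h_def using vec_powi_torus[OF g_torus, of P'] P' by simp
    have "vec_powi h P = g"
      using g_torus P' unfolding h_def vec_powi_mult[OF g_torus P'(1) P(1)]
      by (simp add: vec_powi_one_mat torus_def)
    with g h member[OF h] show "g \<in> (\<lambda>h. vec_powi h P) ` root_torus n k s"
      unfolding root_torus_def by force
  qed
qed

lemma prod_lessThan_add:
  "(\<Prod>l<m + p. f l) = (\<Prod>l<m. f l) * (\<Prod>i<(p :: nat). f (m + i) :: 'a :: comm_monoid_mult)"
  by (induction p) (simp_all add: mult.assoc)

lemma param_map_eq_vec_powi:
  assumes nk: "n \<le> k" and P: "P \<in> carrier_mat k k"
    and w: "w \<in> carrier_vec n" and lam: "lam \<in> carrier_vec (k - n)"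
  shows "param_map n k P z w lam = vec k (\<lambda>j. vec_powi (w @\<^sub>v lam) P $ j * z $ j)"
proof (rule eq_vecI)
  fix j assume "j < dim_vec (vec k (\<lambda>j. vec_powi (w @\<^sub>v lam) P $ j * z $ j))"
  then have j: "j < dim_col P" using P by simp
  have "dim_vec (w @\<^sub>v lam) = n + (k - n)" and "(w @\<^sub>v lam) $ l = w $ l" if "l < n" for l
    using w lam that nk by auto
  then show "param_map n k P z w lam $ j = vec k (\<lambda>j. vec_powi (w @\<^sub>v lam) P $ j * z $ j) $ j"
    using j P w lam by (simp add: param_map_def prod_lessThan_add)
qed (simp add: param_map_def)

lemma append_vec_image_param_domain:
  assumes nk: "n \<le> k" and s_pos: "\<forall>i<n. s i > 0"
  shows "(\<lambda>(w, lam). w @\<^sub>v lam) ` param_domain n k s = root_torus n k s"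
proof -
  have root_iff: "x ^ nat (s i) = 1 \<longleftrightarrow> x \<noteq> 0 \<and> x powi s i = 1" if "i < n" for i and x :: complex
    using s_pos that by (auto simp: power_int_nonneg_exp less_imp_le power_0_left)
  have "w @\<^sub>v lam \<in> root_torus n k s" if "(w, lam) \<in> param_domain n k s" for w lam
  proof -
    from that have w: "w \<in> carrier_vec n" "\<forall>i<n. w $ i \<noteq> 0 \<and> w $ i powi s i = 1"
      and lam: "lam \<in> carrier_vec (k - n)" "\<forall>i<k - n. lam $ i \<noteq> 0"
      using root_iff by (auto simp: param_domain_def)
    have "w @\<^sub>v lam \<in> carrier_vec k" using w lam nk append_carrier_vec[OF w(1) lam(1)] by simp
    moreover have "(w @\<^sub>v lam) $ i \<noteq> 0" if "i < k" for i
      using w lam that nk by (cases "i < n") auto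
    ultimately show ?thesis using w lam by (simp add: root_torus_def torus_def)
  qed
  moreover have "h \<in> (\<lambda>(w, lam). w @\<^sub>v lam) ` param_domain n k s" if h: "h \<in> root_torus n k s" for h
  proof
    have "h \<in> carrier_vec (n + (k - n))" using h nk by (simp add: root_torus_def torus_def)
    then show "h = (\<lambda>(w, lam). w @\<^sub>v lam) (vec_first h n, vec_last h (k - n))" by simp
    show "(vec_first h n, vec_last h (k - n)) \<in> param_domain n k s"
      using h nk root_iff
      by (auto simp: param_domain_def root_torus_def torus_def vec_first_def vec_last_def)
  qed
  ultimately show ?thesis by auto
qed

lemma torus_mult_notin_base_locus:
  assumes g: "g \<in> torus k" and z: "z \<in> carrier_vec k - base_locus n k \<Sigma> \<rho>"
  shows "vec k (\<lambda>i. g $ i * z $ i) \<in> carrier_vec k - base_locus n k \<Sigma> \<rho>"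
proof -
  from z obtain \<sigma> where \<sigma>: "\<sigma> \<in> \<Sigma>" "cone_dim n \<sigma> n"
    and nz: "(\<Prod>i\<in>{i. i < k \<and> \<not> \<rho> i \<subseteq> \<sigma>}. z $ i) \<noteq> 0"
    unfolding base_locus_def by auto
  have "(\<Prod>i\<in>{i. i < k \<and> \<not> \<rho> i \<subseteq> \<sigma>}. g $ i * z $ i) \<noteq> 0"
    using nz g by (auto simp: prod.distrib torus_def)
  with \<sigma> show ?thesis unfolding base_locus_def by auto
qed

section \<open>The ray generators of a complete fan span\<close>

lemma dotp_diff_scale_left: "dotp n (\<lambda>j. u j - t * v j) w = dotp n u w - t * dotp n v w"
  unfolding dotp_def by (simp add: algebra_simps sum_subtractf sum_distrib_left)

lemma dotp_diff_scale_right: "dotp n w (\<lambda>j. u j - t * v j) = dotp n w u - t * dotp n w v"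
  unfolding dotp_def by (simp add: algebra_simps sum_subtractf sum_distrib_left)

lemma dotp_uminus_left: "dotp n (\<lambda>j. - u j) w = - dotp n u w"
  unfolding dotp_def by (simp add: sum_negf)

lemma dotp_uminus_right: "dotp n w (\<lambda>j. - u j) = - dotp n w u"
  unfolding dotp_def by (simp add: sum_negf)

lemma dotp_zero_right [simp]: "dotp n u (\<lambda>j. 0) = 0"
  unfolding dotp_def by simp

lemma dotp_sum_left: "dotp n (\<lambda>j. \<Sum>x\<in>A. Y x j) v = (\<Sum>x\<in>A. dotp n (Y x) v)"
  unfolding dotp_def by (simp add: sum_distrib_right sum.swap[of _ A])

lemma dotp_sum_right: "dotp n g (\<lambda>j. \<Sum>x\<in>A. c x * x j) = (\<Sum>x\<in>A. c x * dotp n g x)"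
  unfolding dotp_def by (simp add: sum_distrib_left sum.swap[of _ A] mult.left_commute)

lemma dotp_unit_left: "j < n \<Longrightarrow> dotp n (\<lambda>i. of_bool (i = j)) v = v j"
  unfolding dotp_def by simp

lemma dotp_restrict_left: "dotp n (\<lambda>j. if j < n then y j else 0) v = dotp n y v"
  unfolding dotp_def by (intro sum.cong) auto

lemma dotp_self_pos: "j < n \<Longrightarrow> v j \<noteq> 0 \<Longrightarrow> 0 < dotp n v v"
  unfolding dotp_def by (rule sum_pos2[of _ j]) (auto simp: zero_less_mult_iff)

lemma Rn_nonzero_coord:
  assumes "m \<in> Rn n" and "m \<noteq> (\<lambda>j. 0)"
  shows "\<exists>j<n. m j \<noteq> 0"
proof (rule ccontr)
  assume "\<not> (\<exists>j<n. m j \<noteq> 0)"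
  with assms(1) have "m j = 0" for j by (cases "j < n") (auto simp: Rn_def)
  with assms(2) show False by auto
qed

lemma generator_in_cone_gen:
  assumes "finite S" and "x \<in> S"
  shows "x \<in> cone_gen S"
proof -
  have "S \<inter> {y. y = x} = {x}" using assms(2) by auto
  with assms(1) show ?thesis
    unfolding cone_gen_def by (intro CollectI exI[of _ "\<lambda>y. of_bool (y = x)"]) simp
qed

lemma cone_gen_dotp_nonneg:
  assumes "p \<in> cone_gen S" and "\<forall>x\<in>S. 0 \<le> dotp n g x"
  shows "0 \<le> dotp n g p"
proof -
  obtain c where c: "\<forall>x\<in>S. 0 \<le> c x" and p: "p = (\<lambda>j. \<Sum>x\<in>S. c x * x j)"
    using assms(1) unfolding cone_gen_def by auto
  show ?thesis unfolding p dotp_sum_right using c assms(2) by (intro sum_nonneg) auto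
qed

definition in_cone_idx :: "nat \<Rightarrow> nat \<Rightarrow> (nat \<Rightarrow> nat \<Rightarrow> real) \<Rightarrow> (nat \<Rightarrow> real) \<Rightarrow> bool" where
  "in_cone_idx n N a b \<longleftrightarrow> (\<exists>c. (\<forall>i<N. 0 \<le> c i) \<and> (\<forall>j<n. b j = (\<Sum>i<N. c i * a i j)))"

lemma in_cone_idx_Suc:
  assumes "in_cone_idx n N a b"
  shows "in_cone_idx n (Suc N) a b"
proof -
  obtain c where "\<forall>i<N. 0 \<le> c i" "\<forall>j<n. b j = (\<Sum>i<N. c i * a i j)"
    using assms unfolding in_cone_idx_def by blast
  then show ?thesis unfolding in_cone_idx_def
    by (intro exI[of _ "\<lambda>i. if i < N then c i else 0"]) auto
qed

(* Fourier-Motzkin step: eliminating a N along a functional y with y(a N) < 0. *)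
lemma in_cone_idx_of_projection:
  assumes \<alpha>: "\<alpha> = dotp n y (a N)" "\<alpha> < 0"
    and y: "\<forall>i<N. 0 \<le> dotp n y (a i)" "dotp n y b < 0"
    and proj: "in_cone_idx n N (\<lambda>i j. a i j - dotp n y (a i) / \<alpha> * a N j)
                 (\<lambda>j. b j - dotp n y b / \<alpha> * a N j)"
  shows "in_cone_idx n (Suc N) a b"
proof -
  obtain c where c: "\<forall>i<N. 0 \<le> c i"
    and b: "\<forall>j<n. b j - dotp n y b / \<alpha> * a N j
              = (\<Sum>i<N. c i * (a i j - dotp n y (a i) / \<alpha> * a N j))"
    using proj unfolding in_cone_idx_def by blast
  define cN where "cN = (dotp n y b - (\<Sum>i<N. c i * dotp n y (a i))) / \<alpha>"
  have "0 \<le> (\<Sum>i<N. c i * dotp n y (a i))" using c y by (intro sum_nonneg) auto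
  then have "0 \<le> cN" unfolding cN_def using \<alpha> y by (intro divide_nonpos_neg) auto
  moreover have "b j = (\<Sum>i<N. c i * a i j) + cN * a N j" if "j < n" for j
  proof -
    have "(\<Sum>i<N. c i * (a i j - dotp n y (a i) / \<alpha> * a N j))
        = (\<Sum>i<N. c i * a i j) - (\<Sum>i<N. c i * dotp n y (a i)) / \<alpha> * a N j"
      by (simp add: algebra_simps sum_subtractf sum_distrib_left sum_distrib_right
          sum_divide_distrib)
    with b that show ?thesis by (simp add: cN_def diff_divide_distrib algebra_simps)
  qed
  ultimately show ?thesis unfolding in_cone_idx_def using c
    by (intro exI[of _ "\<lambda>i. if i < N then c i else cN"]) (auto simp: less_Suc_eq)
qed

lemma farkas_lemma_idx:
  "\<not> in_cone_idx n N a b \<Longrightarrow> \<exists>y. (\<forall>i<N. 0 \<le> dotp n y (a i)) \<and> dotp n y b < 0"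
proof (induction N arbitrary: a b)
  case 0
  then obtain j where "j < n" "b j \<noteq> 0" unfolding in_cone_idx_def by auto
  then have "dotp n (\<lambda>j. - b j) b < 0" by (simp add: dotp_uminus_left dotp_self_pos)
  then show ?case by auto
next
  case (Suc N)
  have "\<not> in_cone_idx n N a b" using Suc.prems in_cone_idx_Suc by blast
  from Suc.IH[OF this] obtain y where y: "\<forall>i<N. 0 \<le> dotp n y (a i)" "dotp n y b < 0" by blast
  show ?case
  proof (cases "0 \<le> dotp n y (a N)")
    case True
    with y show ?thesis by (intro exI[of _ y]) (auto simp: less_Suc_eq)
  next
    case False
    define \<alpha> where "\<alpha> = dotp n y (a N)"
    have \<alpha>: "\<alpha> < 0" using False by (simp add: \<alpha>_def)
    define a' where "a' = (\<lambda>i j. a i j - dotp n y (a i) / \<alpha> * a N j)"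
    define b' where "b' = (\<lambda>j. b j - dotp n y b / \<alpha> * a N j)"
    have "\<not> in_cone_idx n N a' b'"
      using in_cone_idx_of_projection[OF \<alpha>_def \<alpha> y] Suc.prems by (auto simp: a'_def b'_def)
    from Suc.IH[OF this] obtain y' where y': "\<forall>i<N. 0 \<le> dotp n y' (a' i)" "dotp n y' b' < 0"
      by blast
    define y'' where "y'' = (\<lambda>j. y' j - dotp n y' (a N) / \<alpha> * y j)"
    have "dotp n y'' (a i) = dotp n y' (a' i)" for i
      unfolding y''_def a'_def dotp_diff_scale_left dotp_diff_scale_right by simp
    moreover have "dotp n y'' (a N) = 0"
      unfolding y''_def dotp_diff_scale_left using \<alpha> by (simp add: \<alpha>_def)
    moreover have "dotp n y'' b = dotp n y' b'"
      unfolding y''_def b'_def dotp_diff_scale_left dotp_diff_scale_right by simp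
    ultimately show ?thesis using y' by (intro exI[of _ y'']) (auto simp: less_Suc_eq)
  qed
qed

lemma farkas_lemma:
  assumes fin: "finite S" and S: "S \<subseteq> Rn n" and b: "b \<in> Rn n" and nb: "b \<notin> cone_gen S"
  shows "\<exists>y\<in>Rn n. (\<forall>x\<in>S. 0 \<le> dotp n y x) \<and> dotp n y b < 0"
proof -
  define N where "N = card S"
  obtain e where e: "bij_betw e {..<N} S"
    using ex_bij_betw_nat_finite[OF fin] by (auto simp: N_def atLeast0LessThan)
  have "\<not> in_cone_idx n N e b"
  proof
    assume "in_cone_idx n N e b"
    then obtain c where c: "\<forall>i<N. 0 \<le> c i" "\<forall>j<n. b j = (\<Sum>i<N. c i * e i j)"
      unfolding in_cone_idx_def by auto
    define c' where "c' = (\<lambda>x. c (inv_into {..<N} e x))"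
    have c'_e: "c' (e i) = c i" if "i < N" for i
      using e that by (simp add: c'_def bij_betw_def)
    have "b j = (\<Sum>x\<in>S. c' x * x j)" for j
    proof (cases "j < n")
      case True
      have "(\<Sum>x\<in>S. c' x * x j) = (\<Sum>i<N. c' (e i) * e i j)"
        using sum.reindex_bij_betw[OF e, of "\<lambda>x. c' x * x j"] by simp
      with True c c'_e show ?thesis by simp
    next
      case False
      then have "b j = 0" and "(\<Sum>x\<in>S. c' x * x j) = 0"
        using S b by (auto simp: Rn_def intro!: sum.neutral)
      then show ?thesis by simp
    qed
    moreover have "0 \<le> c' x" if "x \<in> S" for x
      using c e that by (auto simp: c'_def bij_betw_def inv_into_into)
    ultimately have "b \<in> cone_gen S" unfolding cone_gen_def by blast
    with nb show False ..
  qed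
  from farkas_lemma_idx[OF this]
  obtain y where y: "\<forall>i<N. 0 \<le> dotp n y (e i)" "dotp n y b < 0" by blast
  have "\<forall>x\<in>S. 0 \<le> dotp n y x"
    using y(1) e by (auto simp: bij_betw_def)
  with y(2) show ?thesis
    by (intro bexI[of _ "\<lambda>j. if j < n then y j else 0"]) (auto simp: dotp_restrict_left Rn_def)
qed

lemma strongly_convex_pos_functional:
  assumes fin: "finite S" and S: "S \<subseteq> Rn n" and sc: "strongly_convex (cone_gen S)"
  shows "\<exists>y\<in>Rn n. \<forall>x\<in>S - {\<lambda>j. 0}. 0 < dotp n y x"
proof -
  have "\<exists>y\<in>Rn n. (\<forall>x'\<in>S. 0 \<le> dotp n y x') \<and> 0 < dotp n y x" if x: "x \<in> S - {\<lambda>j. 0}" for x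
  proof -
    have "(\<lambda>j. - x j) \<notin> cone_gen S"
    proof
      assume "(\<lambda>j. - x j) \<in> cone_gen S"
      then have "x \<in> cone_gen S \<inter> (\<lambda>v j. - v j) ` cone_gen S"
        using x generator_in_cone_gen[OF fin] by (auto intro: image_eqI[of _ _ "\<lambda>j. - x j"])
      with sc x show False unfolding strongly_convex_def by auto
    qed
    moreover have "(\<lambda>j. - x j) \<in> Rn n" using x S by (auto simp: Rn_def)
    ultimately show ?thesis using farkas_lemma[OF fin S] by (fastforce simp: dotp_uminus_right)
  qed
  then obtain Y where Y: "\<forall>x\<in>S - {\<lambda>j. 0}. Y x \<in> Rn n \<and> (\<forall>x'\<in>S. 0 \<le> dotp n (Y x) x') \<and>
      0 < dotp n (Y x) x"
    by metis
  show ?thesis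
  proof (intro bexI[of _ "\<lambda>j. \<Sum>x\<in>S - {\<lambda>j. 0}. Y x j"] ballI)
    show "(\<lambda>j. \<Sum>x\<in>S - {\<lambda>j. 0}. Y x j) \<in> Rn n" using Y by (auto simp: Rn_def)
    fix t assume t: "t \<in> S - {\<lambda>j. 0}"
    show "0 < dotp n (\<lambda>j. \<Sum>x\<in>S - {\<lambda>j. 0}. Y x j) t"
      unfolding dotp_sum_left using fin Y t by (intro sum_pos2[OF _ t]) auto
  qed
qed

lemma face_of_max_ratio:
  assumes fin: "finite S" and y: "y \<in> Rn n" "\<forall>x\<in>S - {\<lambda>j. 0}. 0 < dotp n y x" and h: "h \<in> Rn n"
    and t: "t \<in> S - {\<lambda>j. 0}"
    and max: "\<forall>x\<in>S - {\<lambda>j. 0}. dotp n h x / dotp n y x \<le> dotp n h t / dotp n y t"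
  obtains g where "face_of_cone n {v \<in> cone_gen S. dotp n g v = 0} (cone_gen S)"
    and "\<And>x. x \<in> S - {\<lambda>j. 0} \<Longrightarrow>
           dotp n g x = 0 \<longleftrightarrow> dotp n h x / dotp n y x = dotp n h t / dotp n y t"
proof
  define M where "M = dotp n h t / dotp n y t"
  define g where "g = (\<lambda>j. M * y j - h j)"
  have g: "dotp n g v = M * dotp n y v - dotp n h v" for v
    unfolding g_def dotp_def by (simp add: algebra_simps sum_subtractf sum_distrib_left)
  have g_ratio: "dotp n g x = dotp n y x * (M - dotp n h x / dotp n y x)" if "x \<in> S - {\<lambda>j. 0}" for x
  proof -
    have "dotp n y x \<noteq> 0" using that y(2) by force
    then show ?thesis by (simp add: g field_simps)
  qed
  have "0 \<le> dotp n g x" if "x \<in> S" for x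
  proof (cases "x = (\<lambda>j. 0)")
    case False
    with that have x: "x \<in> S - {\<lambda>j. 0}" by simp
    with y(2) max have "0 < dotp n y x" "dotp n h x / dotp n y x \<le> M" by (auto simp: M_def)
    with x show ?thesis by (simp add: g_ratio)
  qed (simp add: g)
  moreover have "g \<in> Rn n" using y(1) h by (simp add: g_def Rn_def)
  ultimately show "face_of_cone n {v \<in> cone_gen S. dotp n g v = 0} (cone_gen S)"
    unfolding face_of_cone_def using cone_gen_dotp_nonneg by blast
  show "dotp n g x = 0 \<longleftrightarrow> dotp n h x / dotp n y x = dotp n h t / dotp n y t"
    if "x \<in> S - {\<lambda>j. 0}" for x
  proof -
    have "0 < dotp n y x" using that y(2) by blast
    then show ?thesis using that by (auto simp: g_ratio M_def)
  qed
qed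

lemma finite_ex_max_image:
  fixes f :: "'a \<Rightarrow> 'b :: linorder"
  assumes "finite A" and "A \<noteq> {}"
  shows "\<exists>a\<in>A. \<forall>x\<in>A. f x \<le> f a"
proof -
  have fin: "finite (f ` A)" using assms(1) by simp
  have "Max (f ` A) \<in> f ` A" using assms by simp
  then obtain a where a: "a \<in> A" "f a = Max (f ` A)" by auto
  have "f x \<le> f a" if "x \<in> A" for x using Max_ge[OF fin] that a(2) by simp
  with a(1) show ?thesis by blast
qed

definition minimal_non_orthogonal_cone :: "nat \<Rightarrow> (nat \<Rightarrow> real) set \<Rightarrow> (nat \<Rightarrow> real) \<Rightarrow> bool"
  where "minimal_non_orthogonal_cone n S m \<longleftrightarrow>
    (\<forall>g. face_of_cone n {v \<in> cone_gen S. dotp n g v = 0} (cone_gen S) \<longrightarrow>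
      (\<exists>t\<in>S. dotp n g t = 0 \<and> dotp n m t \<noteq> 0) \<longrightarrow> (\<forall>x\<in>S. dotp n g x = 0))"

lemma max_ratio_const_if_minimal:
  assumes fin: "finite S" and y: "y \<in> Rn n" "\<forall>x\<in>S - {\<lambda>j. 0}. 0 < dotp n y x"
    and min: "minimal_non_orthogonal_cone n S m"
    and h: "h \<in> Rn n" and t: "t \<in> S - {\<lambda>j. 0}" "dotp n m t \<noteq> 0"
    and max: "\<forall>x\<in>S - {\<lambda>j. 0}. dotp n h x / dotp n y x \<le> dotp n h t / dotp n y t"
    and x: "x \<in> S - {\<lambda>j. 0}"
  shows "dotp n h x / dotp n y x = dotp n h t / dotp n y t"
proof -
  obtain g where face: "face_of_cone n {v \<in> cone_gen S. dotp n g v = 0} (cone_gen S)"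
    and g: "\<And>x. x \<in> S - {\<lambda>j. 0} \<Longrightarrow>
              dotp n g x = 0 \<longleftrightarrow> dotp n h x / dotp n y x = dotp n h t / dotp n y t"
    using face_of_max_ratio[OF fin y h t(1) max] by blast
  have "\<exists>t\<in>S. dotp n g t = 0 \<and> dotp n m t \<noteq> 0" using g t by auto
  with min face x have "dotp n g x = 0" unfolding minimal_non_orthogonal_cone_def by blast
  with g x show ?thesis by simp
qed

lemma generators_not_orthogonal_if_minimal:
  assumes fin: "finite S" and y: "y \<in> Rn n" "\<forall>x\<in>S - {\<lambda>j. 0}. 0 < dotp n y x"
    and min: "minimal_non_orthogonal_cone n S m"
    and m: "m \<in> Rn n" and t0: "t0 \<in> S" "dotp n m t0 \<noteq> 0"
    and x: "x \<in> S - {\<lambda>j. 0}"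
  shows "dotp n m x \<noteq> 0"
proof -
  define R where "R h x = dotp n h x / dotp n y x" for h x
  note const = max_ratio_const_if_minimal[OF fin y min, folded R_def]
  have t0': "t0 \<in> S - {\<lambda>j. 0}" using t0 by auto
  have fin': "finite (S - {\<lambda>j. 0})" and ne: "S - {\<lambda>j. 0} \<noteq> {}" using fin t0' by auto
  obtain t1 where t1: "t1 \<in> S - {\<lambda>j. 0}" "\<forall>x\<in>S - {\<lambda>j. 0}. R m x \<le> R m t1"
    using finite_ex_max_image[OF fin' ne, of "R m"] by blast
  show ?thesis
  proof (cases "R m t1 = 0")
    case False
    then have "dotp n m t1 \<noteq> 0" by (simp add: R_def)
    with const[OF m t1(1) this t1(2) x] False have "R m x \<noteq> 0" by simp
    then show ?thesis by (auto simp: R_def)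
  next
    case True
    define m' where "m' = (\<lambda>j. - m j)"
    have m': "m' \<in> Rn n" using m by (simp add: m'_def Rn_def)
    have R_m': "R m' x = - R m x" for x by (simp add: R_def m'_def dotp_uminus_left)
    obtain t2 where t2: "t2 \<in> S - {\<lambda>j. 0}" "\<forall>x\<in>S - {\<lambda>j. 0}. R m' x \<le> R m' t2"
      using finite_ex_max_image[OF fin' ne, of "R m'"] by blast
    have "0 < dotp n y t0" using y(2) t0' by blast
    with t0 have "R m t0 \<noteq> 0" by (simp add: R_def)
    moreover have "R m t0 \<le> R m t1" using t1(2) t0' by blast
    moreover have "R m' t0 \<le> R m' t2" using t2(2) t0' by blast
    ultimately have pos: "0 < R m' t2" using True R_m'[of t0] by linarith
    then have "dotp n m t2 \<noteq> 0" by (auto simp: R_def m'_def dotp_uminus_left)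
    with const[OF m' t2(1) this t2(2) x] pos have "R m' x \<noteq> 0" by simp
    then show ?thesis by (auto simp: R_def m'_def dotp_uminus_left)
  qed
qed

lemma cone_gen_collinear_if_minimal:
  assumes fin: "finite S" and S: "S \<subseteq> Rn n" and sc: "strongly_convex (cone_gen S)"
    and m: "m \<in> Rn n" and t0: "t0 \<in> S" "dotp n m t0 \<noteq> 0"
    and min: "minimal_non_orthogonal_cone n S m"
  shows "\<forall>v\<in>cone_gen S. \<exists>a. \<forall>j<n. v j = a * t0 j"
proof -
  obtain y where y: "y \<in> Rn n" "\<forall>x\<in>S - {\<lambda>j. 0}. 0 < dotp n y x"
    using strongly_convex_pos_functional[OF fin S sc] by blast
  have t0': "t0 \<in> S - {\<lambda>j. 0}" using t0 by auto
  have fin': "finite (S - {\<lambda>j. 0})" and ne: "S - {\<lambda>j. 0} \<noteq> {}" using fin t0' by auto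
  define \<mu> where "\<mu> x = dotp n y x / dotp n y t0" for x
  have coord: "x j = \<mu> x * t0 j" if x: "x \<in> S" and j: "j < n" for x j
  proof (cases "x = (\<lambda>j. 0)")
    case False
    with x have x': "x \<in> S - {\<lambda>j. 0}" by simp
    define e where "e = (\<lambda>i. of_bool (i = j) :: real)"
    have e: "e \<in> Rn n" using j by (auto simp: Rn_def e_def)
    obtain t1 where t1: "t1 \<in> S - {\<lambda>j. 0}"
      "\<forall>x\<in>S - {\<lambda>j. 0}. dotp n e x / dotp n y x \<le> dotp n e t1 / dotp n y t1"
      using finite_ex_max_image[OF fin' ne, of "\<lambda>x. dotp n e x / dotp n y x"] by blast
    note const = max_ratio_const_if_minimal[OF fin y min e t1(1)
        generators_not_orthogonal_if_minimal[OF fin y min m t0 t1(1)] t1(2)]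
    have "dotp n e x / dotp n y x = dotp n e t0 / dotp n y t0"
      using const[OF x'] const[OF t0'] by simp
    moreover have "0 < dotp n y x" "0 < dotp n y t0" using y(2) x' t0' by auto
    ultimately show ?thesis using j by (simp add: e_def dotp_unit_left \<mu>_def field_simps)
  qed (simp add: \<mu>_def)
  show ?thesis
  proof
    fix v assume "v \<in> cone_gen S"
    then obtain c where v: "\<forall>j. v j = (\<Sum>x\<in>S. c x * x j)" unfolding cone_gen_def by blast
    have "v j = (\<Sum>x\<in>S. c x * \<mu> x) * t0 j" if j: "j < n" for j
    proof -
      have "(\<Sum>x\<in>S. c x * x j) = (\<Sum>x\<in>S. c x * \<mu> x * t0 j)"
        using coord[OF _ j] by (intro sum.cong) auto
      then show ?thesis using v by (simp add: sum_distrib_right)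
    qed
    then show "\<exists>a. \<forall>j<n. v j = a * t0 j" by blast
  qed
qed

lemma cone_dim_one_if_collinear:
  assumes t: "t \<in> \<sigma>" "j < n" "t j \<noteq> 0" and collinear: "\<forall>v\<in>\<sigma>. \<exists>a. \<forall>j<n. v j = a * t j"
  shows "cone_dim n \<sigma> 1"
  unfolding cone_dim_def
proof
  show "\<exists>vs. (\<forall>i<1. vs i \<in> \<sigma>) \<and> lin_indep n 1 vs"
    using t by (intro exI[of _ "\<lambda>_. t"]) (auto simp: lin_indep_def)
  show "\<not> (\<exists>vs. (\<forall>i<Suc 1. vs i \<in> \<sigma>) \<and> lin_indep n (Suc 1) vs)"
  proof
    assume "\<exists>vs. (\<forall>i<Suc 1. vs i \<in> \<sigma>) \<and> lin_indep n (Suc 1) vs"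
    then obtain vs where vs: "vs 0 \<in> \<sigma>" "vs 1 \<in> \<sigma>" and li: "lin_indep n (Suc 1) vs" by auto
    have trivial: "c 0 = 0 \<and> c 1 = 0"
      if "\<forall>j<n. c 0 * vs 0 j + c 1 * vs 1 j = 0" for c :: "nat \<Rightarrow> real"
    proof -
      have "\<forall>j<n. (\<Sum>i<Suc 1. c i * vs i j) = 0" using that by simp
      with li have "\<forall>i<Suc 1. c i = 0" unfolding lin_indep_def by blast
      then show ?thesis by simp
    qed
    obtain a0 where a0: "\<forall>j<n. vs 0 j = a0 * t j" using collinear vs(1) by blast
    obtain a1 where a1: "\<forall>j<n. vs 1 j = a1 * t j" using collinear vs(2) by blast
    have "\<forall>j<n. a1 * vs 0 j + - a0 * vs 1 j = 0" using a0 a1 by simp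
    with trivial[of "\<lambda>i. if i = 0 then a1 else - a0"] have "a0 = 0" by simp
    with a0 have "\<forall>j<n. 1 * vs 0 j + 0 * vs 1 j = 0" by simp
    with trivial[of "\<lambda>i. if i = 0 then 1 else 0"] show False by simp
  qed
qed

lemma cone_gen_not_orthogonal_generator:
  assumes "x \<in> cone_gen S" and "dotp n m x \<noteq> 0"
  shows "\<exists>t\<in>S. dotp n m t \<noteq> 0"
proof -
  obtain c where "\<forall>j. x j = (\<Sum>y\<in>S. c y * y j)" using assms(1) unfolding cone_gen_def by auto
  then have "x = (\<lambda>j. \<Sum>y\<in>S. c y * y j)" by (simp add: fun_eq_iff)
  with assms(2) have "(\<Sum>y\<in>S. c y * dotp n m y) \<noteq> 0" by (simp add: dotp_sum_right)
  then obtain t where "t \<in> S" "c t * dotp n m t \<noteq> 0"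
    by (rule sum.not_neutral_contains_not_neutral)
  then show ?thesis by auto
qed

lemma dotp_nonzero_coord:
  assumes "dotp n m t \<noteq> 0"
  shows "\<exists>j<n. t j \<noteq> 0"
proof (rule ccontr)
  assume "\<not> (\<exists>j<n. t j \<noteq> 0)"
  then have "dotp n m t = 0" by (simp add: dotp_def)
  with assms show False ..
qed

lemma fan_has_ray_not_orthogonal:
  assumes fan: "is_fan n \<Sigma>" and m: "m \<in> Rn n"
    and \<sigma>: "\<sigma> \<in> \<Sigma>" "x \<in> \<sigma>" "dotp n m x \<noteq> 0"
  shows "\<exists>\<tau>\<in>\<Sigma>. cone_dim n \<tau> 1 \<and> (\<exists>t\<in>\<tau>. int_vec n t \<and> dotp n m t \<noteq> 0)"
proof -
  have fin_\<Sigma>: "finite \<Sigma>"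
    and cones: "\<forall>\<sigma>\<in>\<Sigma>. rational_polyhedral_cone n \<sigma> \<and> strongly_convex \<sigma>"
    and faces: "\<forall>\<sigma>\<in>\<Sigma>. \<forall>\<tau>. face_of_cone n \<tau> \<sigma> \<longrightarrow> \<tau> \<in> \<Sigma>"
    using fan by (simp_all add: is_fan_def)
  define A where "A = {\<sigma>\<in>\<Sigma>. \<exists>x\<in>\<sigma>. dotp n m x \<noteq> 0}"
  have "finite A" "A \<noteq> {}" using fin_\<Sigma> \<sigma> by (auto simp: A_def)
  then obtain \<tau> where \<tau>A: "\<tau> \<in> A" and \<tau>_min: "\<forall>\<sigma>\<in>A. \<sigma> \<subseteq> \<tau> \<longrightarrow> \<tau> = \<sigma>"
    using finite_has_minimal by blast
  have \<tau>: "\<tau> \<in> \<Sigma>" using \<tau>A by (simp add: A_def)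
  obtain S where fin: "finite S" and S_int: "\<forall>x\<in>S. int_vec n x" and \<tau>S: "\<tau> = cone_gen S"
    using cones \<tau> unfolding rational_polyhedral_cone_def by blast
  have S: "S \<subseteq> Rn n" using S_int by (auto simp: int_vec_def)
  have sc: "strongly_convex (cone_gen S)" using cones \<tau> \<tau>S by simp
  obtain t0 where t0: "t0 \<in> S" "dotp n m t0 \<noteq> 0"
  proof -
    obtain x where "x \<in> cone_gen S" "dotp n m x \<noteq> 0" using \<tau>A \<tau>S by (auto simp: A_def)
    then show ?thesis using cone_gen_not_orthogonal_generator that by blast
  qed
  have "minimal_non_orthogonal_cone n S m"
    unfolding minimal_non_orthogonal_cone_def
  proof (intro allI impI)
    fix g assume face: "face_of_cone n {v \<in> cone_gen S. dotp n g v = 0} (cone_gen S)"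
      and t: "\<exists>t\<in>S. dotp n g t = 0 \<and> dotp n m t \<noteq> 0"
    let ?F = "{v \<in> cone_gen S. dotp n g v = 0}"
    have "?F \<in> \<Sigma>" using faces \<tau> face \<tau>S by blast
    moreover have "\<exists>x\<in>?F. dotp n m x \<noteq> 0" using t generator_in_cone_gen[OF fin] by blast
    ultimately have "?F \<in> A" by (simp add: A_def)
    moreover have "?F \<subseteq> \<tau>" using \<tau>S by auto
    ultimately have \<tau>F: "\<tau> = ?F" using \<tau>_min by blast
    show "\<forall>x\<in>S. dotp n g x = 0"
    proof
      fix x assume "x \<in> S"
      then have "x \<in> \<tau>" using \<tau>S generator_in_cone_gen[OF fin] by simp
      with \<tau>F show "dotp n g x = 0" by simp
    qed
  qed
  then have "\<forall>v\<in>cone_gen S. \<exists>a. \<forall>j<n. v j = a * t0 j"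
    by (rule cone_gen_collinear_if_minimal[OF fin S sc m t0])
  then have collinear: "\<forall>v\<in>\<tau>. \<exists>a. \<forall>j<n. v j = a * t0 j" using \<tau>S by simp
  obtain j where j: "j < n" "t0 j \<noteq> 0" using dotp_nonzero_coord[OF t0(2)] by blast
  have t0_\<tau>: "t0 \<in> \<tau>" using generator_in_cone_gen[OF fin t0(1)] \<tau>S by simp
  have "cone_dim n \<tau> 1" by (rule cone_dim_one_if_collinear[OF t0_\<tau> j collinear])
  moreover have "int_vec n t0" using S_int t0(1) by blast
  ultimately show ?thesis using \<tau> t0_\<tau> t0(2) by blast
qed

lemma complete_fan_rays_span:
  assumes fan: "complete_fan n \<Sigma>"
    and rays: "{\<sigma>\<in>\<Sigma>. cone_dim n \<sigma> 1} = \<rho> ` {..<k}"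
    and prim: "\<forall>i<k. primitive_generator n (col_real F i) (\<rho> i)"
    and m: "m \<in> Rn n" "m \<noteq> (\<lambda>j. 0)"
  shows "\<exists>i<k. dotp n m (col_real F i) \<noteq> 0"
proof -
  obtain \<sigma> where \<sigma>: "\<sigma> \<in> \<Sigma>" "m \<in> \<sigma>" using fan m by (auto simp: complete_fan_def)
  have "dotp n m m \<noteq> 0" using Rn_nonzero_coord[OF m] dotp_self_pos by fastforce
  then obtain \<tau> t where \<tau>: "\<tau> \<in> \<Sigma>" "cone_dim n \<tau> 1" and t: "t \<in> \<tau>" "int_vec n t" "dotp n m t \<noteq> 0"
    using fan_has_ray_not_orthogonal[OF _ m(1) \<sigma>] fan by (auto simp: complete_fan_def)
  then obtain i where i: "i < k" "\<tau> = \<rho> i" using rays by blast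
  then obtain c :: nat where "t = (\<lambda>j. real c * col_real F i j)"
    using prim t by (auto simp: primitive_generator_def)
  then have "dotp n m t = real c * dotp n m (col_real F i)"
    by (simp add: dotp_def sum_distrib_left mult.left_commute)
  with t i show ?thesis by auto
qed

lemma det_non_zero_imp_col_non_zero:
  assumes Q: "(Q :: 'a :: idom mat) \<in> carrier_mat n n" and "det Q \<noteq> 0" and j: "j < n"
  shows "col Q j \<noteq> 0\<^sub>v n"
proof
  assume col: "col Q j = 0\<^sub>v n"
  have "Q *\<^sub>v unit_vec n j = col Q j" using col_mult2[OF Q one_carrier_mat j] Q j by simp
  moreover have "unit_vec n j \<noteq> (0\<^sub>v n :: 'a vec)" using j by (auto simp: vec_eq_iff)
  ultimately have "det Q = 0"
    unfolding det_0_iff_vec_prod_zero[OF Q] using col by (intro exI[of _ "unit_vec n j"]) simp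
  with assms(2) show False ..
qed

lemma det_non_zero_imp_kernel_trivial:
  assumes "(P :: 'a :: idom mat) \<in> carrier_mat k k" and "det P \<noteq> 0"
    and "v \<in> carrier_vec k" and "P *\<^sub>v v = 0\<^sub>v k"
  shows "v = 0\<^sub>v k"
  using assms det_0_iff_vec_prod_zero[OF assms(1)] by blast

lemma le_of_smith_normal_form:
  assumes span: "\<And>m. m \<in> Rn n \<Longrightarrow> m \<noteq> (\<lambda>j. 0) \<Longrightarrow> \<exists>i<k. dotp n m (col_real F i) \<noteq> 0"
    and F: "F \<in> carrier_mat n k"
    and P: "P \<in> carrier_mat k k" "det P \<noteq> 0"
    and Q: "Q \<in> carrier_mat n n" "det Q \<noteq> 0"
    and snf: "P * transpose_mat F * Q = mat k n (\<lambda>(i, j). if i = j then s i else 0)"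
  shows "n \<le> k"
proof (rule ccontr)
  assume "\<not> n \<le> k"
  then have kn: "k < n" by simp
  have FT: "transpose_mat F \<in> carrier_mat k n" using F by simp
  define q where "q = col Q k"
  have q: "q \<in> carrier_vec n" using Q(1) unfolding q_def by (intro carrier_vecI) simp
  have "P *\<^sub>v (transpose_mat F *\<^sub>v q) = col (P * transpose_mat F * Q) k"
    using col_mult2[OF P(1) mult_carrier_mat[OF FT Q(1)] kn] col_mult2[OF FT Q(1) kn]
    by (simp add: q_def assoc_mult_mat[OF P(1) FT Q(1)])
  also have "\<dots> = 0\<^sub>v k" unfolding snf using kn by (auto simp: vec_eq_iff)
  finally have Fq: "transpose_mat F *\<^sub>v q = 0\<^sub>v k"
    by (rule det_non_zero_imp_kernel_trivial[OF P mult_mat_vec_carrier[OF FT q]])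
  define m where "m = (\<lambda>j. if j < n then real_of_int (q $ j) else 0)"
  have "m \<in> Rn n" by (simp add: m_def Rn_def)
  moreover have "m \<noteq> (\<lambda>j. 0)"
  proof -
    have "q \<noteq> 0\<^sub>v n" unfolding q_def by (rule det_non_zero_imp_col_non_zero[OF Q kn])
    then obtain j where "j < n" "q $ j \<noteq> 0" using q by (auto simp: vec_eq_iff)
    then have "m j \<noteq> 0" by (simp add: m_def)
    then show ?thesis by auto
  qed
  ultimately obtain i where i: "i < k" "dotp n m (col_real F i) \<noteq> 0" using span by blast
  have "dotp n m (col_real F i) = real_of_int ((transpose_mat F *\<^sub>v q) $ i)"
    using F q i by (simp add: dotp_def m_def col_real_def scalar_prod_def atLeast0LessThan mult.commute)
  with Fq i show False by simp
qed

theorem lemma3p1: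
  fixes n k :: nat
    and \<Sigma> :: "(nat \<Rightarrow> real) set set"
    and \<rho> :: "nat \<Rightarrow> (nat \<Rightarrow> real) set"
    and F P Q :: "int mat"
    and s :: "nat \<Rightarrow> int"
    and z :: "complex vec"
  assumes fan: "complete_fan n \<Sigma>"
    and rays: "{\<sigma>\<in>\<Sigma>. cone_dim n \<sigma> 1} = \<rho> ` {..<k}"
    and rays_inj: "inj_on \<rho> {..<k}"
    and F: "F \<in> carrier_mat n k"
    and prim: "\<forall>i<k. primitive_generator n (col_real F i) (\<rho> i)"
    and P: "P \<in> carrier_mat k k" "det P = 1 \<or> det P = -1"
    and Q: "Q \<in> carrier_mat n n" "det Q = 1 \<or> det Q = -1"
    and snf: "P * transpose_mat F * Q = mat k n (\<lambda>(i, j). if i = j then s i else 0)"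
    and s_pos: "\<forall>i<n. s i > 0"
    and s_dvd: "\<forall>i. Suc i < n \<longrightarrow> s i dvd s (Suc i)"
    and z: "z \<in> carrier_vec k - base_locus n k \<Sigma> \<rho>"
  shows "case_prod (param_map n k P z) ` param_domain n k s \<subseteq> carrier_vec k - base_locus n k \<Sigma> \<rho> \<and>
         orbit k (cox_group n k F) z = case_prod (param_map n k P z) ` param_domain n k s"
proof -
  have nk: "n \<le> k"
    using complete_fan_rays_span[OF fan rays prim] F P Q snf
    by (intro le_of_smith_normal_form) auto
  have "orbit k (cox_group n k F) z = (\<lambda>h. vec k (\<lambda>j. vec_powi h P $ j * z $ j)) ` root_torus n k s"
    unfolding orbit_def cox_group_eq_vec_powi_image[OF nk F P Q snf] image_image ..
  also have "\<dots> = case_prod (param_map n k P z) ` param_domain n k s"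
    unfolding append_vec_image_param_domain[OF nk s_pos, symmetric] image_image
    using param_map_eq_vec_powi[OF nk P(1)] by (intro image_cong) (auto simp: param_domain_def)
  finally have orbit: "orbit k (cox_group n k F) z = case_prod (param_map n k P z) ` param_domain n k s" .
  have "orbit k (cox_group n k F) z \<subseteq> carrier_vec k - base_locus n k \<Sigma> \<rho>"
    using torus_mult_notin_base_locus[OF _ z] cox_group_iff[OF F] unfolding orbit_def by blast
  with orbit show ?thesis by simp
qed

end
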